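(* Let $\lambda$ be a nonzero real number, $x$ real, and $n\ge0$ an integer. Then $$\sum_{k=0}^{n}\beta_{k,\lambda}(x)\,S_{1,\lambda}(n,k)=n!\sum_{k=0}^{n}\binom{x}{k}\frac{\lambda^{n-k}(1)_{n-k+1,\frac{1}{\lambda}}}{(n-k+1)!}.$$
   Context: For real $y$, $\mu\neq 0$ and integer $k\ge0$: $(y)_{0,\mu}=1$, $(y)_{k,\mu}=y(y-\mu)\cdots(y-(k-1)\mu)$ (used with $\mu=\lambda$ and $\mu=1/\lambda$); $(y)_0=1$, $(y)_k=y(y-1)\cdots(y-k+1)$. The degenerate exponential is $e_\lambda^x(t)=\sum_{k\ge0}(x)_{k,\lambda}t^k/k!=(1+\lambda t)^{x/\lambda}$, $e_\lambda(t)=e^1_\lambda(t)$. The degenerate Bernoulli polynomials are defined by $\frac{t}{e_\lambda(t)-1}e_\lambda^x(t)=\sum_{n\ge0}\beta_{n,\lambda}(x)\frac{t^n}{n!}$. The degenerate Stirling numbers of the first kind are defined by $(x)_{n}=\sum_{k=0}^{n}S_{1,\lambda}(n,k)(x)_{k,\lambda}$ ($n\ge0$). *)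

theory Defs
  imports "HOL-Analysis.Analysis" "HOL-Computational_Algebra.Formal_Power_Series"
begin

text \<open>Generalized falling factorial (y)_{k,mu} = y(y-mu)...(y-(k-1)mu).\<close>
definition dfall :: "real \<Rightarrow> real \<Rightarrow> nat \<Rightarrow> real" where
  "dfall mu y k = (\<Prod>i<k. y - real i * mu)"

definition dexp :: "real \<Rightarrow> real \<Rightarrow> real fps" where
  "dexp lam x = Abs_fps (\<lambda>k. dfall lam x k / fact k)"

definition dbernoulli :: "nat \<Rightarrow> real \<Rightarrow> real \<Rightarrow> real" where
  "dbernoulli n lam x = fact n * fps_nth ((fps_X / (dexp lam 1 - 1)) * dexp lam x) n"

definition dstirling1 :: "real \<Rightarrow> nat \<Rightarrow> nat \<Rightarrow> real" where
  "dstirling1 lam n = (THE c. (\<forall>k>n. c k = 0) \<and>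
      (\<forall>x. dfall 1 x n = (\<Sum>k\<le>n. c k * dfall lam x k)))"

end

theory Submission
  imports Defs
begin

text \<open>Let \<open>L(t) = ((1+t)\<^sup>\<lambda> - 1)/\<lambda>\<close> be the degenerate logarithm \<open>log\<^sub>\<lambda>(1+t)\<close>
  (\<open>dlog\<close> below).
  It inverts the degenerate exponential: \<open>e\<^sub>\<lambda>\<^sup>y(L(t)) = (1+t)\<^sup>y\<close>, because
  \<open>e\<^sub>\<lambda>\<^sup>y(t) = (1+\<lambda>t)\<^bsup>y/\<lambda>\<^esup>\<close> and binomial series compose as
  \<open>(1+((1+t)\<^sup>b-1))\<^sup>a = (1+t)\<^bsup>ab\<^esup>\<close>. Comparing coefficients of \<open>t\<^sup>n\<close> in this identity
  expands \<open>(x)\<^sub>n\<close> in the basis \<open>(x)\<^sub>k\<^sub>,\<^sub>\<lambda>\<close>, whence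
  \<open>S\<^sub>1\<^sub>,\<^sub>\<lambda>(n,k) = n!/k! [t\<^sup>n] L(t)\<^sup>k\<close>. So the left-hand side is \<open>n!\<close> times the
  coefficient of \<open>t\<^sup>n\<close> in the Bernoulli generating function evaluated at \<open>L(t)\<close>, which is
  \<open>L(t)/t \<cdot> (1+t)\<^sup>x\<close>; the right-hand side is that coefficient written out, since
  \<open>[t\<^bsup>m+1\<^esup>] L(t) = \<lambda>\<^sup>m (1)\<^bsub>m+1,1/\<lambda>\<^esub> / (m+1)!\<close>.\<close>

lemma fps_binomial_deriv_mult:
  "(1 + fps_X) * fps_deriv (fps_binomial c) = fps_const (c :: 'a :: field_char_0) * fps_binomial c"
  by (simp add: fps_binomial_deriv fps_divide_unit inverse_mult_eq_1' mult_ac)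

lemma fps_binomial_compose_binomial:
  "fps_binomial a oo (fps_binomial b - 1) = fps_binomial (a * b :: 'a :: field_char_0)"
proof -
  define v where "v = fps_binomial b - 1"
  define G where "G = fps_binomial a oo v"
  have v0: "fps_nth v 0 = 0"
    by (simp add: v_def)
  have binomial_b: "fps_binomial b = (1 + fps_X) oo v"
    using v0 by (simp add: v_def fps_compose_add_distrib)
  have "(1 + fps_X) * fps_deriv G
          = (fps_deriv (fps_binomial a) oo v) * ((1 + fps_X) * fps_deriv (fps_binomial b))"
    by (simp add: G_def fps_compose_deriv[OF v0] mult_ac) (simp add: v_def)
  also have "\<dots> = fps_const b * ((fps_deriv (fps_binomial a) oo v) * ((1 + fps_X) oo v))"
    by (simp add: fps_binomial_deriv_mult flip: binomial_b)
  also have "\<dots> = fps_const b * (((1 + fps_X) * fps_deriv (fps_binomial a)) oo v)"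
    by (simp add: fps_compose_mult_distrib[OF v0] mult_ac)
  also have "\<dots> = fps_const (a * b) * G"
    unfolding fps_binomial_deriv_mult G_def
    by (simp add: fps_compose_mult_distrib[OF v0] mult_ac flip: fps_const_mult)
  finally have "(1 + fps_X) * fps_deriv G = fps_const (a * b) * G" .
  moreover have "(1 + fps_X :: 'a fps) \<noteq> 0"
    by (rule fps_nonzeroI[of _ 0]) simp
  ultimately have "fps_deriv G = fps_const (a * b) * G / (1 + fps_X)"
    by (metis nonzero_mult_div_cancel_left)
  moreover have "fps_nth G 0 = 1"
    by (simp add: G_def)
  ultimately have "G = fps_binomial (a * b)"
    using fps_binomial_ODE_unique' by blast
  then show ?thesis
    by (simp add: G_def v_def)
qed

lemma dfall_eq_gbinomial:
  assumes "mu \<noteq> 0"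
  shows "dfall mu y k = fact k * mu ^ k * ((y / mu) gchoose k)"
proof -
  have "mu ^ k * (\<Prod>i = 0..<k. y / mu - of_nat i) = (\<Prod>i<k. mu * (y / mu - of_nat i))"
    by (simp add: prod.distrib atLeast0LessThan)
  also have "\<dots> = dfall mu y k"
    unfolding dfall_def using assms by (intro prod.cong) (auto simp: field_simps)
  finally show ?thesis
    by (simp add: gbinomial_prod_rev)
qed

lemma dexp_eq_binomial_compose:
  assumes "lam \<noteq> 0"
  shows "dexp lam y = fps_binomial (y / lam) oo (fps_const lam * fps_X)"
  using assms by (simp add: fps_eq_iff fps_compose_linear dexp_def dfall_eq_gbinomial)

definition dlog :: "real \<Rightarrow> real fps" where
  "dlog lam = fps_const (1 / lam) * (fps_binomial lam - 1)"

lemma fps_nth_dlog_0 [simp]: "fps_nth (dlog lam) 0 = 0"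
  by (simp add: dlog_def)

lemma fps_nth_dlog_Suc:
  assumes "lam \<noteq> 0"
  shows "fps_nth (dlog lam) (Suc m) = lam ^ m * dfall (1 / lam) 1 (Suc m) / fact (Suc m)"
  using assms by (simp add: dlog_def dfall_eq_gbinomial power_divide)

lemma dexp_compose_dlog:
  assumes "lam \<noteq> 0"
  shows "dexp lam y oo dlog lam = fps_binomial y"
proof -
  have "(fps_const lam * fps_X) oo dlog lam = fps_binomial lam - 1"
    using assms by (simp add: fps_compose_mult_distrib dlog_def flip: fps_const_mult)
  then have "dexp lam y oo dlog lam = fps_binomial (y / lam) oo (fps_binomial lam - 1)"
    by (simp add: dexp_eq_binomial_compose[OF assms] flip: fps_compose_assoc)
  also have "\<dots> = fps_binomial y"
    using assms by (simp add: fps_binomial_compose_binomial)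
  finally show ?thesis .
qed

lemma dfall_coeffs_eq_0:
  assumes "lam \<noteq> 0" and "\<And>x. (\<Sum>k\<le>n. c k * dfall lam x k) = 0" and "j \<le> n"
  shows "c j = 0"
  using \<open>j \<le> n\<close>
proof (induction j rule: less_induct)
  case (less j)
  txt \<open>Evaluate at \<open>x = j\<lambda>\<close>, a zero of \<open>(x)\<^sub>k\<^sub>,\<^sub>\<lambda>\<close> for every \<open>k > j\<close> but not for \<open>k = j\<close>.\<close>
  define y where "y = real j * lam"
  have "c k * dfall lam y k = 0" if "k \<in> {..n} - {j}" for k
  proof (cases "k < j")
    case True
    then show ?thesis
      using less that by simp
  next
    case False
    with that have "j \<in> {..<k}"
      by auto
    then show ?thesis
      unfolding dfall_def y_def by (subst prod_zero[of "{..<k}"]) auto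
  qed
  then have "(\<Sum>k\<in>{..n} - {j}. c k * dfall lam y k) = 0"
    by (intro sum.neutral) blast
  then have "(\<Sum>k\<le>n. c k * dfall lam y k) = c j * dfall lam y j"
    using less.prems by (subst sum.remove[of _ j]) auto
  moreover have "dfall lam y j \<noteq> 0"
    using \<open>lam \<noteq> 0\<close> by (auto simp: dfall_def y_def simp flip: left_diff_distrib)
  ultimately show ?case
    using assms(2)[of y] by simp
qed

lemma dfall_one_expansion_dlog:
  assumes "lam \<noteq> 0"
  shows "dfall 1 x n = (\<Sum>k\<le>n. fact n / fact k * fps_nth (dlog lam ^ k) n * dfall lam x k)"
proof -
  have "(\<Sum>k\<le>n. dfall lam x k / fact k * fps_nth (dlog lam ^ k) n) = dfall 1 x n / fact n"
    using arg_cong[OF dexp_compose_dlog[OF assms, of x], of "\<lambda>f. fps_nth f n"]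
    by (simp add: fps_compose_nth dexp_def atMost_atLeast0 dfall_eq_gbinomial)
  then show ?thesis
    by (simp add: field_simps sum_distrib_left)
qed

lemma dstirling1_eq_fps_nth_dlog_power:
  assumes "lam \<noteq> 0"
  shows "dstirling1 lam n k = fact n / fact k * fps_nth (dlog lam ^ k) n"
proof -
  define s where "s k = fact n / fact k * fps_nth (dlog lam ^ k) n" for k
  have s_spec: "(\<forall>k>n. s k = 0) \<and> (\<forall>x. dfall 1 x n = (\<Sum>k\<le>n. s k * dfall lam x k))"
    using startsby_zero_power_prefix[OF fps_nth_dlog_0] dfall_one_expansion_dlog[OF assms]
    by (simp add: s_def)
  have "c = s" if c_spec: "(\<forall>k>n. c k = 0) \<and> (\<forall>x. dfall 1 x n = (\<Sum>k\<le>n. c k * dfall lam x k))"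
    for c
  proof
    fix k
    show "c k = s k"
    proof (cases "k \<le> n")
      case True
      have "(\<Sum>k\<le>n. (c k - s k) * dfall lam x k) = 0" for x
        using c_spec s_spec by (simp add: left_diff_distrib sum_subtractf)
      then show ?thesis
        using dfall_coeffs_eq_0[OF assms _ True, of "\<lambda>k. c k - s k"] by simp
    qed (use c_spec s_spec in auto)
  qed
  with s_spec have "dstirling1 lam n = s"
    unfolding dstirling1_def by (rule the_equality)
  then show ?thesis
    by (simp add: s_def)
qed

lemma X_div_dexp_minus_one_mult:
  "fps_X / (dexp lam 1 - 1) * (dexp lam 1 - 1) = fps_X"
proof -
  have "fps_nth (dexp lam 1 - 1) 1 = 1"
    by (simp add: dexp_def dfall_def)
  then have "dexp lam 1 - 1 \<noteq> 0" and "subdegree (dexp lam 1 - 1) \<le> 1"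
    by (auto intro: subdegree_leI)
  then have "(dexp lam 1 - 1) dvd fps_X"
    by (simp add: fps_dvd_iff)
  then show ?thesis
    by simp
qed

lemma fps_nth_dbernoulli_gf_compose_dlog:
  assumes "lam \<noteq> 0"
  shows "fps_nth ((fps_X / (dexp lam 1 - 1) * dexp lam x) oo dlog lam) n
       = (\<Sum>k\<le>n. (x gchoose k) * fps_nth (dlog lam) (Suc (n - k)))"
proof -
  define Q where "Q = fps_X / (dexp lam 1 - 1) oo dlog lam"
  have "Q * ((dexp lam 1 oo dlog lam) - 1) = fps_X oo dlog lam"
    by (subst X_div_dexp_minus_one_mult[symmetric])
      (simp add: Q_def fps_compose_mult_distrib fps_compose_sub_distrib)
  then have "fps_X * Q = dlog lam"
    by (simp add: dexp_compose_dlog[OF assms] fps_binomial_1 mult.commute)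
  then have Q_nth: "fps_nth Q m = fps_nth (dlog lam) (Suc m)" for m
    using fps_X_mult_nth[of Q "Suc m"] by simp
  have "(fps_X / (dexp lam 1 - 1) * dexp lam x) oo dlog lam = fps_binomial x * Q"
    by (simp add: Q_def fps_compose_mult_distrib dexp_compose_dlog[OF assms] mult.commute)
  then show ?thesis
    by (simp add: fps_mult_nth Q_nth atMost_atLeast0)
qed

theorem theorem6:
  fixes lam x :: real and n :: nat
  assumes "lam \<noteq> 0"
  shows "(\<Sum>k\<le>n. dbernoulli k lam x * dstirling1 lam n k)
       = fact n * (\<Sum>k\<le>n. (x gchoose k) * lam ^ (n - k) * dfall (1 / lam) 1 (n - k + 1)
                                / fact (n - k + 1))"
proof -
  define B where "B = fps_X / (dexp lam 1 - 1) * dexp lam x"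
  have "(\<Sum>k\<le>n. dbernoulli k lam x * dstirling1 lam n k)
      = fact n * (\<Sum>k\<le>n. fps_nth B k * fps_nth (dlog lam ^ k) n)"
    by (simp add: dbernoulli_def dstirling1_eq_fps_nth_dlog_power[OF assms] B_def
        sum_distrib_left mult_ac)
  also have "\<dots> = fact n * fps_nth (B oo dlog lam) n"
    by (simp add: fps_compose_nth atMost_atLeast0)
  also have "\<dots> = fact n * (\<Sum>k\<le>n. (x gchoose k) * fps_nth (dlog lam) (Suc (n - k)))"
    by (simp add: B_def fps_nth_dbernoulli_gf_compose_dlog[OF assms])
  finally show ?thesis
    by (simp add: fps_nth_dlog_Suc[OF assms] mult.assoc)
qed

end
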